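(* Let $J_1\in\mathbb{R}$, $J_2>0$, $T>0$, $\beta=1/T$, $a=e^{J_1\beta}$, $b=e^{J_2\beta}$, and $T_c=\frac{2J_2}{\ln 3}$. Consider the fixed points of $F$ lying in $M_1$ (called paramagnetic phases). If $T\ge T_c$, then $F$ has exactly one fixed point in $M_1$. If $T<T_c$, then $F$ has exactly three fixed points in $M_1$ when $b^3\sqrt{\nu_1}<a^{-1}<b^3\sqrt{\nu_2}$, and exactly two when $a^{-1}=b^3\sqrt{\nu_1}$ or $a^{-1}=b^3\sqrt{\nu_2}$, where $$\nu_i=\frac{1}{y_i}\left(\frac{1+y_i}{b^4+y_i}\right)^2,\quad i=1,2,$$ and $y_1<y_2$ are the two positive roots of $y^2+(3-b^4)y+b^4=0$.
   Context: $F:\mathbb{R}^4_+\to\mathbb{R}^4_+$ (positive coordinates) is $F(u)=(u_1',u_2',u_3',u_4')$ with $u_1'=a(bu_1+b^{-1}u_2)^2$, $u_2'=a^{-1}(bu_3+b^{-1}u_4)^2$, $u_3'=a^{-1}(b^{-1}u_1+bu_2)^2$, $u_4'=a(b^{-1}u_3+bu_4)^2$. $M_1=\{u\in\mathbb{R}^4_+:\ u_1=u_4,\ u_2=u_3\}$. This map is the recurrence for the partition functions of the Ising model on the Cayley tree of order 2 with nearest-neighbour coupling $J_1$ and prolonged next-nearest-neighbour coupling $J_2$ at inverse temperature $\beta$. *)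

theory Defs
  imports Complex_Main
begin

definition pos4 :: "(real \<times> real \<times> real \<times> real) set" where
  "pos4 = {(u1,u2,u3,u4). u1 > 0 \<and> u2 > 0 \<and> u3 > 0 \<and> u4 > 0}"

definition Fmap :: "real \<Rightarrow> real \<Rightarrow> real \<times> real \<times> real \<times> real \<Rightarrow> real \<times> real \<times> real \<times> real" where
  "Fmap a b = (\<lambda>(u1,u2,u3,u4).
     (a * (b*u1 + u2/b)^2,
      (1/a) * (b*u3 + u4/b)^2,
      (1/a) * (u1/b + b*u2)^2,
      a * (u3/b + b*u4)^2))"

definition M1 :: "(real \<times> real \<times> real \<times> real) set" where
  "M1 = {(u1,u2,u3,u4). (u1,u2,u3,u4) \<in> pos4 \<and> u1 = u4 \<and> u2 = u3}"

definition para_fixed :: "real \<Rightarrow> real \<Rightarrow> (real \<times> real \<times> real \<times> real) set" where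
  "para_fixed a b = {u \<in> M1. Fmap a b u = u}"

definition nu :: "real \<Rightarrow> real \<Rightarrow> real" where
  "nu b y = (1/y) * ((1 + y) / (b^4 + y))^2"

end

theory Submission
  imports Defs
begin

(*
  A point of M1 has the form (x, y, y, x) with x, y > 0, and the four fixed-point
  equations of F collapse to two.  Writing x = w^2 y / b^2 with w > 0, these two
  equations are equivalent to the single scalar equation G b w = a b^3, where
  G b w = w (b^4 + w^2) / (1 + w^2), with y then determined by w.  Hence the
  paramagnetic phases are in bijection with the positive roots of G b w = a b^3.

  The derivative of G has the sign of w^4 + (3 - b^4) w^2 + b^4.  If b^2 <= 3
  (i.e. T >= Tc) this is nonnegative with at most one zero, so G is strictly
  increasing on [0, oo) and the root is unique.  If the quadratic
  t^2 + (3 - b^4) t + b^4 has positive roots y1 < y2, then G increases on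
  [0, sqrt y1], decreases on [sqrt y1, sqrt y2] and increases on [sqrt y2, oo);
  counting roots on the three pieces gives 3 roots when G(sqrt y2) < a b^3 <
  G(sqrt y1) and 2 roots when a b^3 equals one of the critical values.  Finally
  b^3 sqrt(nu b y) = b^3 / G b (sqrt y), which turns these conditions into the
  ones of the theorem.
*)

definition G :: "real \<Rightarrow> real \<Rightarrow> real" where
  "G b w = w * (b^4 + w^2) / (1 + w^2)"

text \<open>Numerator of the derivative of G; it decides where G increases or decreases.\<close>
definition G_slope :: "real \<Rightarrow> real \<Rightarrow> real" where
  "G_slope b w = w^4 + (3 - b^4) * w^2 + b^4"

lemma one_plus_square_pos: "0 < 1 + (w::real)^2"
  by (simp add: add_pos_nonneg)

lemma G_continuous: "continuous_on S (G b)"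
  unfolding G_def using one_plus_square_pos
  by (intro continuous_intros) (auto simp: less_imp_neq[symmetric])

lemma G_derivative: "DERIV (G b) w :> G_slope b w / (1 + w^2)^2"
proof -
  have num: "DERIV (\<lambda>w. w * (b^4 + w^2)) w :> b^4 + 3 * w^2"
    by (rule derivative_eq_intros refl)+ (simp add: algebra_simps power2_eq_square)
  have den: "DERIV (\<lambda>w. 1 + w^2) w :> 2 * w"
    by (rule derivative_eq_intros refl)+ simp
  have "(b^4 + 3 * w^2) * (1 + w^2) - w * (b^4 + w^2) * (2 * w) = G_slope b w"
    by (simp add: G_slope_def algebra_simps power2_eq_square power4_eq_xxxx)
  with DERIV_divide[OF num den] one_plus_square_pos[of w] show ?thesis
    unfolding G_def by (simp add: power2_eq_square)
qed

lemma G_strict_mono_on: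
  assumes "\<And>u v w. u \<in> S \<Longrightarrow> v \<in> S \<Longrightarrow> u < w \<Longrightarrow> w < v \<Longrightarrow> 0 < G_slope b w"
  shows "strict_mono_on S (G b)"
proof (rule strict_mono_onI)
  fix u v assume uv: "u \<in> S" "v \<in> S" "u < v"
  show "G b u < G b v"
  proof (rule DERIV_pos_imp_increasing_open[OF \<open>u < v\<close> _ G_continuous])
    fix w assume "u < w" "w < v"
    with assms uv one_plus_square_pos[of w] G_derivative[of b w]
    show "\<exists>d. DERIV (G b) w :> d \<and> 0 < d" by auto
  qed
qed

lemma G_strict_antimono_on:
  assumes "\<And>u v w. u \<in> S \<Longrightarrow> v \<in> S \<Longrightarrow> u < w \<Longrightarrow> w < v \<Longrightarrow> G_slope b w < 0"
  shows "strict_antimono_on S (G b)"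
proof (rule monotone_onI)
  fix u v assume uv: "u \<in> S" "v \<in> S" "u < v"
  show "G b v < G b u"
  proof (rule DERIV_neg_imp_decreasing_open[OF \<open>u < v\<close> _ G_continuous])
    fix w assume "u < w" "w < v"
    with assms uv one_plus_square_pos[of w] G_derivative[of b w]
    show "\<exists>d. DERIV (G b) w :> d \<and> d < 0" by (auto simp: divide_neg_pos)
  qed
qed

lemma G_attains:
  assumes "u \<le> v" and "G b u \<le> K \<and> K \<le> G b v \<or> G b v \<le> K \<and> K \<le> G b u"
  shows "\<exists>r. u \<le> r \<and> r \<le> v \<and> G b r = K"
  using assms IVT'[of "G b" u K v] IVT2'[of "G b" v K u] G_continuous by blast

lemma G_zero [simp]: "G b 0 = 0"
  by (simp add: G_def)

lemma G_pos: "0 < w \<Longrightarrow> 0 < G b w"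
  unfolding G_def by (simp add: add_pos_nonneg add_nonneg_pos)

text \<open>For b > 1, G grows faster than the identity; this bounds its roots from above.\<close>
lemma G_above_identity:
  assumes "1 < b^4" "0 < v"
  shows "v < G b v"
proof -
  have "v * (1 + v^2) < v * (b^4 + v^2)" using assms by simp
  thus ?thesis unfolding G_def by (simp add: field_simps add_pos_nonneg)
qed

section \<open>Reduction of the fixed-point problem to the level equation\<close>

lemma fixed_point_equations_iff:
  fixes a b w x y :: real
  assumes a: "0 < a" and b: "0 < b" and w: "0 < w" and y: "0 < y"
    and x: "x = w^2 * y / b^2"
  shows "(x = a * (b*x + y/b)^2 \<and> y = (1/a) * (b*y + x/b)^2) \<longleftrightarrow>
         (G b w = a * b^3 \<and> y = a * b^6 / (b^4 + w^2)^2)"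
proof -
  define D where "D = b^4 + w^2"
  have D: "0 < D" using b by (simp add: D_def add_pos_nonneg)
  have s1: "b*x + y/b = y * (1 + w^2) / b"
    using b by (simp add: x field_simps power2_eq_square)
  have s2: "b*y + x/b = y * D / b^3"
    using b by (simp add: x D_def field_simps power2_eq_square power3_eq_cube power4_eq_xxxx)
  have "a * (b*x + y/b)^2 = (a * y * (1 + w^2)^2) * y / b^2"
    by (simp add: s1 power_divide power_mult_distrib power2_eq_square)
  hence eq1: "x = a * (b*x + y/b)^2 \<longleftrightarrow> w^2 = a * y * (1 + w^2)^2"
    using b y by (simp add: x)
  have "(1/a) * (b*y + x/b)^2 = (y * D^2) * y / (a * b^6)"
    by (simp add: s2 power_divide power_mult_distrib power2_eq_square flip: power_mult)
  moreover have "y = (y * D^2) * y / (a * b^6) \<longleftrightarrow> a * b^6 = y * D^2"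
    using a b y by (auto simp: eq_divide_eq)
  ultimately have "y = (1/a) * (b*y + x/b)^2 \<longleftrightarrow> a * b^6 = y * D^2"
    by simp
  also have "\<dots> \<longleftrightarrow> y = a * b^6 / D^2"
    using D by (auto simp: field_simps)
  finally have eq2: "y = (1/a) * (b*y + x/b)^2 \<longleftrightarrow> y = a * b^6 / D^2" .
  have eq3: "w^2 = a * (a * b^6 / D^2) * (1 + w^2)^2 \<longleftrightarrow> G b w = a * b^3"
  proof -
    have pos: "0 < w * D" "0 < a * b^3 * (1 + w^2)"
      using a b w D by (simp_all add: add_pos_nonneg)
    have "(a * b^3 * (1 + w^2))^2 = a * (a * b^6) * (1 + w^2)^2"
      by (simp add: power_mult_distrib power2_eq_square flip: power_mult)
    hence "w^2 = a * (a * b^6 / D^2) * (1 + w^2)^2 \<longleftrightarrow> (w * D)^2 = (a * b^3 * (1 + w^2))^2"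
      using D by (simp add: field_simps power_mult_distrib)
    also have "\<dots> \<longleftrightarrow> w * D = a * b^3 * (1 + w^2)"
      using pos by (simp add: power2_eq_iff_nonneg)
    also have "\<dots> \<longleftrightarrow> G b w = a * b^3"
      using one_plus_square_pos[of w] by (simp add: G_def D_def divide_eq_eq)
    finally show ?thesis .
  qed
  show ?thesis using eq1 eq2 eq3 by (auto simp: D_def)
qed

definition pos_roots :: "real \<Rightarrow> real \<Rightarrow> real set" where
  "pos_roots b K = {w. 0 < w \<and> G b w = K}"

definition phase :: "real \<Rightarrow> real \<Rightarrow> real \<Rightarrow> real \<times> real \<times> real \<times> real" where
  "phase a b w = (let y = a * b^6 / (b^4 + w^2)^2; x = w^2 * y / b^2 in (x, y, y, x))"

lemma para_fixed_eq_phases: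
  assumes a: "0 < a" and b: "0 < b"
  shows "para_fixed a b = phase a b ` pos_roots b (a * b^3)"
proof
  show "para_fixed a b \<subseteq> phase a b ` pos_roots b (a * b^3)"
  proof
    fix u assume "u \<in> para_fixed a b"
    then obtain x y where u: "u = (x, y, y, x)" "0 < x" "0 < y"
      and eqs: "x = a * (b*x + y/b)^2" "y = (1/a) * (b*y + x/b)^2"
      unfolding para_fixed_def M1_def pos4_def Fmap_def by auto
    define w where "w = b * sqrt (x / y)"
    have w: "0 < w" using b u by (simp add: w_def)
    have x: "x = w^2 * y / b^2"
      using b u by (simp add: w_def power_mult_distrib)
    from eqs fixed_point_equations_iff[OF a b w \<open>0 < y\<close> x]
    have "G b w = a * b^3" "y = a * b^6 / (b^4 + w^2)^2" by auto
    with w x u show "u \<in> phase a b ` pos_roots b (a * b^3)"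
      unfolding pos_roots_def phase_def Let_def by auto
  qed
  show "phase a b ` pos_roots b (a * b^3) \<subseteq> para_fixed a b"
  proof
    fix u assume "u \<in> phase a b ` pos_roots b (a * b^3)"
    then obtain w where w: "0 < w" "G b w = a * b^3" and u: "u = phase a b w"
      unfolding pos_roots_def by auto
    define y where "y = a * b^6 / (b^4 + w^2)^2"
    define x where "x = w^2 * y / b^2"
    have "0 < b^4 + w^2" using b by (simp add: add_pos_nonneg)
    hence y: "0 < y" using a b by (simp add: y_def)
    have x: "0 < x" using b w y by (simp add: x_def)
    from fixed_point_equations_iff[OF a b \<open>0 < w\<close> y x_def] w y_def
    have "x = a * (b*x + y/b)^2" "y = (1/a) * (b*y + x/b)^2" by blast+
    with x y show "u \<in> para_fixed a b"
      unfolding u phase_def Let_def x_def[symmetric] y_def[symmetric]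
        para_fixed_def M1_def pos4_def Fmap_def
      by (simp add: add.commute mult.commute)
  qed
qed

text \<open>Distinct positive parameters give distinct phases: y is shared, so x determines w^2.\<close>
lemma phase_inj:
  assumes "0 < a" "0 < b"
  shows "inj_on (phase a b) {0<..}"
proof
  fix w w' :: real assume ww': "w \<in> {0<..}" "w' \<in> {0<..}"
    and eq: "phase a b w = phase a b w'"
  define y where "y = a * b^6 / (b^4 + w^2)^2"
  have "0 < b^4 + w^2" using assms by (simp add: add_pos_nonneg)
  hence y: "0 < y" using assms by (simp add: y_def)
  from eq have "w^2 * y / b^2 = w'^2 * y / b^2"
    unfolding phase_def Let_def y_def by auto
  hence "w^2 = w'^2" using y assms by simp
  thus "w = w'" using ww' by (auto intro: power2_eq_imp_eq)
qed

lemma card_para_fixed: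
  assumes "0 < a" "0 < b"
  shows "card (para_fixed a b) = card (pos_roots b (a * b^3))"
proof -
  have "inj_on (phase a b) (pos_roots b (a * b^3))"
    by (rule inj_on_subset[OF phase_inj[OF assms]]) (auto simp: pos_roots_def)
  thus ?thesis using para_fixed_eq_phases[OF assms] card_image by metis
qed

section \<open>High temperature: a unique root\<close>

lemma G_strict_mono_high_temp:
  assumes b: "0 < b" "b^2 \<le> 3"
  shows "strict_mono_on {0..} (G b)"
proof -
  (* The slope is a sum of squares vanishing at most at w = b. *)
  have slope: "0 < G_slope b w" if "0 \<le> w" "w \<noteq> b" for w
  proof -
    have "w^2 \<noteq> b^2" using that b by (metis power2_eq_imp_eq less_imp_le)
    hence "0 < (w^2 - b^2)^2" by simp
    moreover have "0 \<le> (3 - b^2) * (1 + b^2) * w^2" using b by simp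
    moreover have "G_slope b w = (w^2 - b^2)^2 + (3 - b^2) * (1 + b^2) * w^2"
      by (simp add: G_slope_def algebra_simps power2_eq_square power4_eq_xxxx)
    ultimately show ?thesis by linarith
  qed
  have left: "strict_mono_on {0..b} (G b)" and right: "strict_mono_on {b..} (G b)"
    using b by (auto intro!: G_strict_mono_on slope)
  show ?thesis
  proof (rule strict_mono_onI)
    fix u v :: real assume "u \<in> {0..}" "v \<in> {0..}" "u < v"
    then consider "v \<le> b" | "b \<le> u" | "u < b" "b < v" by fastforce
    thus "G b u < G b v"
    proof cases
      case 1
      thus ?thesis using \<open>u \<in> {0..}\<close> \<open>u < v\<close> by (intro strict_mono_onD[OF left]) auto
    next
      case 2
      thus ?thesis using \<open>u < v\<close> by (intro strict_mono_onD[OF right]) auto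
    next
      case 3
      hence "G b u < G b b" "G b b < G b v"
        using \<open>u \<in> {0..}\<close> b by (auto intro: strict_mono_onD[OF left] strict_mono_onD[OF right])
      thus ?thesis by simp
    qed
  qed
qed

lemma card_pos_roots_high_temp:
  assumes b: "0 < b" "1 < b^4" "b^2 \<le> 3" and K: "0 < K"
  shows "card (pos_roots b K) = 1"
proof -
  have "K < G b (K + 1)" using G_above_identity[OF b(2), of "K + 1"] K by simp
  then obtain r where r: "0 \<le> r" "G b r = K"
    using G_attains[of 0 "K + 1" b K] K by auto
  have "r \<noteq> 0" using r K by auto
  have inj: "inj_on (G b) {0..}"
    using G_strict_mono_high_temp[OF b(1,3)] strict_mono_on_imp_inj_on by blast
  have "pos_roots b K = {r}"
    using r \<open>r \<noteq> 0\<close> inj_onD[OF inj] unfolding pos_roots_def by fastforce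
  thus ?thesis by simp
qed

section \<open>Low temperature: two critical points\<close>

lemma square_strict_mono: "0 \<le> u \<Longrightarrow> u < v \<Longrightarrow> u^2 < (v::real)^2"
  by (simp add: power_strict_mono)

text \<open>y1 < y2 are the positive roots of t^2 + (3 - b^4) t + b^4; their square roots are
  the critical points of G on (0, oo).\<close>
locale critical_points =
  fixes b y1 y2 :: real
  assumes y: "0 < y1" "y1 < y2" "y1^2 + (3 - b^4) * y1 + b^4 = 0"
      "y2^2 + (3 - b^4) * y2 + b^4 = 0"
begin

definition "w1 = sqrt y1"
definition "w2 = sqrt y2"

lemma w12: "0 < w1" "w1 < w2" "w1^2 = y1" "w2^2 = y2"
  using y by (auto simp: w1_def w2_def)

lemma vieta: "y1 + y2 = b^4 - 3" "y1 * y2 = b^4"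
proof -
  have "(y1 - y2) * (y1 + y2 + (3 - b^4)) = 0"
    using y by (simp add: algebra_simps power2_eq_square)
  thus sum: "y1 + y2 = b^4 - 3" using y by simp
  have "y1^2 + (-(y1 + y2)) * y1 + b^4 = 0" using y(3) sum by simp
  thus "y1 * y2 = b^4" by (simp add: algebra_simps power2_eq_square)
qed

lemma slope_factor: "G_slope b w = (w^2 - y1) * (w^2 - y2)"
proof -
  have "3 - b^4 = - (y1 + y2)" using vieta by simp
  hence "G_slope b w = w^4 + (- (y1 + y2)) * w^2 + y1 * y2"
    unfolding G_slope_def vieta(2) by (simp only:)
  also have "\<dots> = (w^2 - y1) * (w^2 - y2)"
    by (simp add: algebra_simps power2_eq_square power4_eq_xxxx)
  finally show ?thesis .
qed

lemma inj_left: "inj_on (G b) {0..w1}"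
proof (rule strict_mono_on_imp_inj_on, rule G_strict_mono_on)
  fix u v w assume "u \<in> {0..w1}" "v \<in> {0..w1}" "u < w" "w < v"
  hence "w^2 < w1^2" by (intro square_strict_mono) auto
  hence "w^2 < y1" using w12 by simp
  thus "0 < G_slope b w" using y by (simp add: slope_factor mult_neg_neg)
qed

lemma G_decreasing_middle: "strict_antimono_on {w1..w2} (G b)"
proof (rule G_strict_antimono_on)
  fix u v w assume "u \<in> {w1..w2}" "v \<in> {w1..w2}" "u < w" "w < v"
  hence "w1^2 < w^2" "w^2 < w2^2"
    using w12 square_strict_mono[of w1 w] square_strict_mono[of w w2] by auto
  hence "y1 < w^2" "w^2 < y2" using w12 by simp_all
  thus "G_slope b w < 0" by (simp add: slope_factor mult_pos_neg)
qed

lemma inj_middle: "inj_on (G b) {w1..w2}"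
  using G_decreasing_middle strict_antimono_iff_antimono by blast

lemma inj_right: "inj_on (G b) {w2..}"
proof (rule strict_mono_on_imp_inj_on, rule G_strict_mono_on)
  fix u v w assume "u \<in> {w2..}" "v \<in> {w2..}" "u < w" "w < v"
  hence "w2^2 < w^2" using w12 by (intro square_strict_mono) auto
  hence "y2 < w^2" using w12 by simp
  thus "0 < G_slope b w" using y by (simp add: slope_factor)
qed

lemma G_critical_values: "G b w2 < G b w1"
  using monotone_onD[OF G_decreasing_middle, of w1 w2] w12 by simp

lemma b4_gt_3: "3 < b^4"
  using vieta y by simp

lemma roots_on_pieces:
  assumes "G b w2 \<le> K" "K \<le> G b w1"
  obtains r1 r2 r3 where "0 < r1" "r1 \<le> w1" "w1 \<le> r2" "r2 \<le> w2" "w2 \<le> r3"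
    "G b r1 = K" "G b r2 = K" "G b r3 = K"
proof -
  have K: "0 < K" using G_pos[of w2 b] w12 assms(1) by simp
  obtain r1 where r1: "0 \<le> r1" "r1 \<le> w1" "G b r1 = K"
    using G_attains[of 0 w1 b K] w12 K assms by auto
  have "r1 \<noteq> 0" using r1 K by auto
  obtain r2 where r2: "w1 \<le> r2" "r2 \<le> w2" "G b r2 = K"
    using G_attains[of w1 w2 b K] w12 assms by auto
  have "K < G b (w2 + K)"
    using G_above_identity[of b "w2 + K"] b4_gt_3 w12 K by simp
  then obtain r3 where r3: "w2 \<le> r3" "G b r3 = K"
    using G_attains[of w2 "w2 + K" b K] K assms by auto
  show ?thesis
    by (rule that[of r1 r2 r3]) (use r1 \<open>r1 \<noteq> 0\<close> r2 r3 in auto)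
qed

lemma pos_roots_on_pieces:
  assumes "0 < r1" "r1 \<le> w1" "w1 \<le> r2" "r2 \<le> w2" "w2 \<le> r3"
    and "G b r1 = K" "G b r2 = K" "G b r3 = K"
  shows "pos_roots b K = {r1, r2, r3}"
proof
  show "{r1, r2, r3} \<subseteq> pos_roots b K"
    using assms w12 by (auto simp: pos_roots_def)
  show "pos_roots b K \<subseteq> {r1, r2, r3}"
  proof
    fix w assume "w \<in> pos_roots b K"
    hence w: "0 < w" "G b w = K" by (auto simp: pos_roots_def)
    consider "w \<le> w1" | "w1 \<le> w" "w \<le> w2" | "w2 \<le> w" by linarith
    thus "w \<in> {r1, r2, r3}"
    proof cases
      case 1
      have "w = r1" by (rule inj_onD[OF inj_left]) (use 1 w assms in auto)
      thus ?thesis by simp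
    next
      case 2
      have "w = r2" by (rule inj_onD[OF inj_middle]) (use 2 w assms in auto)
      thus ?thesis by simp
    next
      case 3
      have "w = r3" by (rule inj_onD[OF inj_right]) (use 3 w assms in auto)
      thus ?thesis by simp
    qed
  qed
qed

lemma card_pos_roots_three:
  assumes "G b w2 < K" "K < G b w1"
  shows "card (pos_roots b K) = 3"
proof -
  obtain r1 r2 r3 where r: "0 < r1" "r1 \<le> w1" "w1 \<le> r2" "r2 \<le> w2" "w2 \<le> r3"
    "G b r1 = K" "G b r2 = K" "G b r3 = K"
    using roots_on_pieces[OF less_imp_le[OF assms(1)] less_imp_le[OF assms(2)]] by blast
  have "r1 \<noteq> w1" "r2 \<noteq> w2" using r assms by auto
  hence "r1 < r2" "r2 < r3" using r by (auto dest: order_le_neq_trans)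
  thus ?thesis using pos_roots_on_pieces[OF r] by simp
qed

text \<open>At a critical value two of the three roots merge.\<close>
lemma card_pos_roots_two:
  assumes "K = G b w1 \<or> K = G b w2"
  shows "card (pos_roots b K) = 2"
proof -
  have "G b w2 \<le> K" "K \<le> G b w1" using assms G_critical_values by auto
  then obtain r1 r2 r3 where r: "0 < r1" "r1 \<le> w1" "w1 \<le> r2" "r2 \<le> w2" "w2 \<le> r3"
    "G b r1 = K" "G b r2 = K" "G b r3 = K"
    using roots_on_pieces by blast
  from assms show ?thesis
  proof
    assume K: "K = G b w1"
    have "r1 = w1" by (rule inj_onD[OF inj_left]) (use r K w12 in auto)
    moreover have "r2 = w1" by (rule inj_onD[OF inj_middle]) (use r K w12 in auto)
    moreover have "w2 < r3"
      using r K G_critical_values by (auto intro: order_le_neq_trans)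
    ultimately show ?thesis using pos_roots_on_pieces[OF r] w12 by simp
  next
    assume K: "K = G b w2"
    have "r3 = w2" by (rule inj_onD[OF inj_right]) (use r K w12 in auto)
    moreover have "r2 = w2" by (rule inj_onD[OF inj_middle]) (use r K w12 in auto)
    moreover have "r1 < w1"
      using r K G_critical_values by (auto intro: order_le_neq_trans)
    ultimately show ?thesis using pos_roots_on_pieces[OF r] w12 by simp
  qed
qed

end

text \<open>The thresholds of the theorem are the critical values of G in disguise.\<close>
lemma sqrt_nu_eq:
  assumes "0 < b" "0 < y"
  shows "sqrt (nu b y) = 1 / G b (sqrt y)"
proof -
  have "0 < b^4 + y" using assms by (simp add: add_pos_nonneg)
  hence "nu b y = (1 / G b (sqrt y))^2"
    unfolding nu_def G_def using assms by (simp add: power_divide power_mult_distrib)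
  moreover have "0 < G b (sqrt y)" using G_pos assms by simp
  ultimately show ?thesis by simp
qed

lemma above_critical_temperature_iff:
  fixes J2 T b Tc :: real
  assumes "0 < T" "b = exp (J2 * (1/T))" "Tc = 2 * J2 / ln 3"
  shows "Tc \<le> T \<longleftrightarrow> b^2 \<le> 3"
proof -
  have "b^2 = exp (2 * J2 / T)" using assms by (simp add: power2_eq_square flip: exp_add)
  have "Tc \<le> T \<longleftrightarrow> 2 * J2 / T \<le> ln 3"
    using assms by (simp add: divide_le_eq mult.commute)
  also have "\<dots> \<longleftrightarrow> exp (2 * J2 / T) \<le> exp (ln 3)" by (simp only: exp_le_cancel_iff)
  also have "\<dots> \<longleftrightarrow> b^2 \<le> 3" using \<open>b^2 = exp (2 * J2 / T)\<close> by simp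
  finally show ?thesis .
qed

theorem theorem1:
  fixes J1 J2 T a b Tc :: real
  assumes "J2 > 0" and "T > 0"
    and "a = exp (J1 * (1/T))" and "b = exp (J2 * (1/T))"
    and "Tc = 2 * J2 / ln 3"
  shows "(T \<ge> Tc \<longrightarrow> card (para_fixed a b) = 1) \<and>
         (T < Tc \<longrightarrow>
            (\<forall>y1 y2. 0 < y1 \<and> y1 < y2 \<and>
                y1^2 + (3 - b^4) * y1 + b^4 = 0 \<and>
                y2^2 + (3 - b^4) * y2 + b^4 = 0 \<longrightarrow>
              (b^3 * sqrt (nu b y1) < 1/a \<and> 1/a < b^3 * sqrt (nu b y2)
                 \<longrightarrow> card (para_fixed a b) = 3) \<and>
              (1/a = b^3 * sqrt (nu b y1) \<or> 1/a = b^3 * sqrt (nu b y2)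
                 \<longrightarrow> card (para_fixed a b) = 2)))"
proof -
  have a: "0 < a" and b: "1 < b" using assms by simp_all
  have count: "card (para_fixed a b) = card (pos_roots b (a * b^3))"
    using card_para_fixed a b by simp
  show ?thesis
  proof (intro conjI impI allI)
    assume "T \<ge> Tc"
    with above_critical_temperature_iff assms have "b^2 \<le> 3" by blast
    thus "card (para_fixed a b) = 1"
      using count card_pos_roots_high_temp[of b "a * b^3"] a b by (simp add: one_less_power)
  next
    fix y1 y2
    assume "0 < y1 \<and> y1 < y2 \<and> y1^2 + (3 - b^4) * y1 + b^4 = 0 \<and> y2^2 + (3 - b^4) * y2 + b^4 = 0"
    then interpret critical_points b y1 y2 by unfold_locales auto
    have G_crit: "0 < G b w1" "0 < G b w2" using G_pos w12 by auto
    have nu_crit: "sqrt (nu b y1) = 1 / G b w1" "sqrt (nu b y2) = 1 / G b w2"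
      using sqrt_nu_eq b y unfolding w1_def w2_def by simp_all
    have threshold:
      "b^3 * sqrt (nu b y1) < 1/a \<longleftrightarrow> a * b^3 < G b w1"
      "1/a < b^3 * sqrt (nu b y2) \<longleftrightarrow> G b w2 < a * b^3"
      "1/a = b^3 * sqrt (nu b y1) \<longleftrightarrow> a * b^3 = G b w1"
      "1/a = b^3 * sqrt (nu b y2) \<longleftrightarrow> a * b^3 = G b w2"
      unfolding nu_crit using a G_crit by (auto simp: field_simps)
    show "b^3 * sqrt (nu b y1) < 1/a \<and> 1/a < b^3 * sqrt (nu b y2) \<Longrightarrow> card (para_fixed a b) = 3"
      using count card_pos_roots_three threshold by simp
    show "1/a = b^3 * sqrt (nu b y1) \<or> 1/a = b^3 * sqrt (nu b y2) \<Longrightarrow> card (para_fixed a b) = 2"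
      using count card_pos_roots_two threshold by simp
  qed
qed

end
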